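(* The function $$u(z)=3\frac{(1-|z|^2)^4}{|1-z|^2}+3\frac{(1-|z|^2)^5}{|1-z|^4}-\frac{3}{2}\frac{(1-|z|^2)^4}{|1-z|^4}+\frac{(1-|z|^2)^6}{|1-z|^6},\quad z\in\mathbb{D},$$ is $w_2$-biharmonic in $\mathbb{D}$, i.e. $\Delta\big((1-|z|^2)^{-2}\Delta u\big)=0$ in $\mathbb{D}$.
   Context: $\mathbb{D}$ is the open unit disc and $\Delta=\partial^2/\partial z\partial\bar z$. The weight is $w_2(z)=(1-|z|^2)^2$, and $u$ is called $w_2$-biharmonic if $\Delta w_2^{-1}\Delta u=0$ in $\mathbb{D}$. *)

theory Defs
  imports "HOL-Analysis.Analysis"
begin

text \<open>Partial derivatives in x and y of a real-valued function on the complex plane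
(z = x + i y), and the operator Delta = d^2/(dz d zbar) = (1/4)(d_xx + d_yy).\<close>

definition pdx :: "(complex \<Rightarrow> real) \<Rightarrow> complex \<Rightarrow> real" where
  "pdx f z = deriv (\<lambda>t::real. f (z + of_real t)) 0"

definition pdy :: "(complex \<Rightarrow> real) \<Rightarrow> complex \<Rightarrow> real" where
  "pdy f z = deriv (\<lambda>t::real. f (z + \<i> * of_real t)) 0"

definition has_pdx :: "(complex \<Rightarrow> real) \<Rightarrow> complex \<Rightarrow> bool" where
  "has_pdx f z \<longleftrightarrow> (\<lambda>t::real. f (z + of_real t)) differentiable (at 0)"

definition has_pdy :: "(complex \<Rightarrow> real) \<Rightarrow> complex \<Rightarrow> bool" where
  "has_pdy f z \<longleftrightarrow> (\<lambda>t::real. f (z + \<i> * of_real t)) differentiable (at 0)"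

definition Lap :: "(complex \<Rightarrow> real) \<Rightarrow> complex \<Rightarrow> real" where
  "Lap f z = (pdx (pdx f) z + pdy (pdy f) z) / 4"

definition Lap_exists :: "(complex \<Rightarrow> real) \<Rightarrow> complex \<Rightarrow> bool" where
  "Lap_exists f z \<longleftrightarrow> 
     (\<forall>\<^sub>F w in at z. has_pdx f w \<and> has_pdy f w) \<and> has_pdx f z \<and> has_pdy f z \<and>
     has_pdx (pdx f) z \<and> has_pdy (pdy f) z"

definition w2 :: "complex \<Rightarrow> real" where
  "w2 z = (1 - (cmod z)^2)^2"

definition w2_biharmonic :: "(complex \<Rightarrow> real) \<Rightarrow> bool" where
  "w2_biharmonic u \<longleftrightarrow>
     (\<forall>z\<in>ball 0 1. Lap_exists u z \<and> Lap_exists (\<lambda>w. Lap u w / w2 w) z \<and>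
        Lap (\<lambda>w. Lap u w / w2 w) z = 0)"

end

theory Submission
  imports Defs
begin

text \<open>
  Write s = 1 - |z|^2 and d = |1 - z|^2. Since |s_z|^2 = 1 - s, 2 Re (s_z d_zbar) = s - d,
  |d_z|^2 = d, Delta s = -1 and Delta d = 1, the chain rule turns Delta into the operator
  F |-> (1 - s) F_ss + (s - d) F_sd + d F_dd - F_s + F_d on functions F(s, d). It maps
  s^a d^-b to a(a-1) s^(a-2) d^-b - a(a-b) s^(a-1) d^-b + b(b-a) s^a d^-(b+1). Both u and
  Delta u / w2 = s^-2 Delta u are finite sums of such monomials, and in Delta (Delta u / w2) all
  terms cancel.
\<close>

lemma eventually_nhds_line:
  fixes w c :: complex
  assumes "open A" "w \<in> A"
  shows "\<forall>\<^sub>F t in nhds (0::real). w + c * of_real t \<in> A"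
proof -
  have "((\<lambda>t::real. w + c * of_real t) \<longlongrightarrow> w) (nhds 0)"
    by (auto intro!: tendsto_eq_intros simp: filterlim_ident)
  from topological_tendstoD[OF this assms] show ?thesis .
qed

lemma pdx_coordI:
  assumes "open A" "w \<in> A" "\<And>v. v \<in> A \<Longrightarrow> f v = G (Re v) (Im v)"
    and "((\<lambda>x. G x (Im w)) has_real_derivative Gx) (at (Re w))"
  shows "has_pdx f w \<and> pdx f w = Gx"
proof -
  have ev: "\<forall>\<^sub>F t in nhds 0. f (w + of_real t) = G (Re w + t) (Im w)"
    using eventually_nhds_line[OF assms(1,2), of 1] by eventually_elim (simp add: assms(3))
  have "((\<lambda>t. G (Re w + t) (Im w)) has_real_derivative Gx) (at 0)"
    using DERIV_shift[of "\<lambda>x. G x (Im w)" Gx 0 "Re w"] assms(4) by (simp add: add.commute)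
  then have "((\<lambda>t. f (w + of_real t)) has_real_derivative Gx) (at 0)"
    using DERIV_cong_ev[OF refl ev refl] by simp
  then show ?thesis
    unfolding has_pdx_def pdx_def using DERIV_imp_deriv real_differentiable_def by blast
qed

lemma pdy_coordI:
  assumes "open A" "w \<in> A" "\<And>v. v \<in> A \<Longrightarrow> f v = G (Re v) (Im v)"
    and "((\<lambda>y. G (Re w) y) has_real_derivative Gy) (at (Im w))"
  shows "has_pdy f w \<and> pdy f w = Gy"
proof -
  have ev: "\<forall>\<^sub>F t in nhds 0. f (w + \<i> * of_real t) = G (Re w) (Im w + t)"
    using eventually_nhds_line[OF assms(1,2), of "\<i>"] by eventually_elim (simp add: assms(3))
  have "((\<lambda>t. G (Re w) (Im w + t)) has_real_derivative Gy) (at 0)"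
    using DERIV_shift[of "\<lambda>y. G (Re w) y" Gy 0 "Im w"] assms(4) by (simp add: add.commute)
  then have "((\<lambda>t. f (w + \<i> * of_real t)) has_real_derivative Gy) (at 0)"
    using DERIV_cong_ev[OF refl ev refl] by simp
  then show ?thesis
    unfolding has_pdy_def pdy_def using DERIV_imp_deriv real_differentiable_def by blast
qed

lemma Lap_coordI:
  assumes "open A" "z \<in> A" "\<And>v. v \<in> A \<Longrightarrow> f v = G (Re v) (Im v)"
    and "\<And>v. v \<in> A \<Longrightarrow> ((\<lambda>x. G x (Im v)) has_real_derivative Gx (Re v) (Im v)) (at (Re v))"
    and "\<And>v. v \<in> A \<Longrightarrow> ((\<lambda>y. G (Re v) y) has_real_derivative Gy (Re v) (Im v)) (at (Im v))"
    and "((\<lambda>x. Gx x (Im z)) has_real_derivative Gxx) (at (Re z))"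
    and "((\<lambda>y. Gy (Re z) y) has_real_derivative Gyy) (at (Im z))"
  shows "Lap_exists f z \<and> Lap f z = (Gxx + Gyy) / 4"
proof -
  have fx: "has_pdx f v \<and> pdx f v = Gx (Re v) (Im v)" if "v \<in> A" for v
    using pdx_coordI[OF assms(1) that assms(3) assms(4)[OF that]] .
  have fy: "has_pdy f v \<and> pdy f v = Gy (Re v) (Im v)" if "v \<in> A" for v
    using pdy_coordI[OF assms(1) that assms(3) assms(5)[OF that]] .
  have fxx: "has_pdx (pdx f) z \<and> pdx (pdx f) z = Gxx"
    using pdx_coordI[where G = Gx, OF assms(1,2) conjunct2[OF fx] assms(6)] .
  have fyy: "has_pdy (pdy f) z \<and> pdy (pdy f) z = Gyy"
    using pdy_coordI[where G = Gy, OF assms(1,2) conjunct2[OF fy] assms(7)] .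
  have "\<forall>\<^sub>F v in at z. has_pdx f v \<and> has_pdy f v"
    using eventually_at_in_open'[OF assms(1,2)] by eventually_elim (simp add: fx fy)
  then show ?thesis
    unfolding Lap_exists_def Lap_def using fx[OF assms(2)] fy[OF assms(2)] fxx fyy by simp
qed

lemma DERIV_compose_pair:
  fixes F :: "real \<times> real \<Rightarrow> real"
  assumes "(F has_derivative (\<lambda>h. Fs * fst h + Fd * snd h)) (at (g t, k t))"
    and "(g has_real_derivative g') (at t)" "(k has_real_derivative k') (at t)"
  shows "((\<lambda>t. F (g t, k t)) has_real_derivative Fs * g' + Fd * k') (at t)"
proof -
  have "((\<lambda>t. (g t, k t)) has_derivative (\<lambda>h. (g' * h, k' * h))) (at t)"
    using has_derivative_Pair[OF assms(2,3)[unfolded has_field_derivative_def]] .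
  from has_derivative_compose[OF this assms(1)]
  have "((\<lambda>t. F (g t, k t)) has_derivative (\<lambda>h. Fs * (g' * h) + Fd * (k' * h))) (at t)"
    by simp
  moreover have "(\<lambda>h. Fs * (g' * h) + Fd * (k' * h)) = (*) (Fs * g' + Fd * k')"
    by (auto simp: fun_eq_iff algebra_simps)
  ultimately show ?thesis
    unfolding has_field_derivative_def by simp
qed

definition SD :: "complex \<Rightarrow> real \<times> real" where
  "SD w = (1 - (cmod w)\<^sup>2, (cmod (1 - w))\<^sup>2)"

definition SD_coord :: "real \<Rightarrow> real \<Rightarrow> real \<times> real" where
  "SD_coord x y = (1 - x\<^sup>2 - y\<^sup>2, (1 - x)\<^sup>2 + y\<^sup>2)"

lemma SD_eq_SD_coord: "SD w = SD_coord (Re w) (Im w)"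
  by (simp add: SD_def SD_coord_def cmod_power2)

lemma DERIV_SD_coord_x:
  assumes "(F has_derivative (\<lambda>h. Fs * fst h + Fd * snd h)) (at (SD_coord x y))"
  shows "((\<lambda>x. F (SD_coord x y)) has_real_derivative Fs * (- 2 * x) + Fd * (2 * x - 2)) (at x)"
  using assms unfolding SD_coord_def
  by (intro DERIV_compose_pair) (auto intro!: derivative_eq_intros)

lemma DERIV_SD_coord_y:
  assumes "(F has_derivative (\<lambda>h. Fs * fst h + Fd * snd h)) (at (SD_coord x y))"
  shows "((\<lambda>y. F (SD_coord x y)) has_real_derivative Fs * (- 2 * y) + Fd * (2 * y)) (at y)"
  using assms unfolding SD_coord_def
  by (intro DERIV_compose_pair) (auto intro!: derivative_eq_intros)

lemma Lap_SD_profile: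
  fixes F Fs Fd Fss Fsd Fdd :: "real \<times> real \<Rightarrow> real"
  assumes "open A" "z \<in> A" "\<And>w. w \<in> A \<Longrightarrow> f w = F (SD w)"
    and "\<And>w. w \<in> A \<Longrightarrow> (F has_derivative (\<lambda>h. Fs (SD w) * fst h + Fd (SD w) * snd h)) (at (SD w))"
    and "(Fs has_derivative (\<lambda>h. Fss (SD z) * fst h + Fsd (SD z) * snd h)) (at (SD z))"
    and "(Fd has_derivative (\<lambda>h. Fsd (SD z) * fst h + Fdd (SD z) * snd h)) (at (SD z))"
    and "SD z = (s, d)"
  shows "Lap_exists f z \<and>
    Lap f z = (1 - s) * Fss (s, d) + (s - d) * Fsd (s, d) + d * Fdd (s, d) - Fs (s, d) + Fd (s, d)"
proof -
  define x y where "x = Re z" and "y = Im z"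
  have xy: "SD_coord x y = (s, d)"
    using assms(7) by (simp add: SD_eq_SD_coord x_def y_def)
  define Gx where "Gx x y = Fs (SD_coord x y) * (- 2 * x) + Fd (SD_coord x y) * (2 * x - 2)" for x y
  define Gy where "Gy x y = Fs (SD_coord x y) * (- 2 * y) + Fd (SD_coord x y) * (2 * y)" for x y
  have dFs: "(Fs has_derivative (\<lambda>h. Fss (s, d) * fst h + Fsd (s, d) * snd h)) (at (SD_coord x y))"
    and dFd: "(Fd has_derivative (\<lambda>h. Fsd (s, d) * fst h + Fdd (s, d) * snd h)) (at (SD_coord x y))"
    using assms(5,6) by (simp_all add: assms(7) xy)
  note Fs_x = DERIV_SD_coord_x[OF dFs] and Fd_x = DERIV_SD_coord_x[OF dFd]
  note Fs_y = DERIV_SD_coord_y[OF dFs] and Fd_y = DERIV_SD_coord_y[OF dFd]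
  have Gxx: "((\<lambda>x. Gx x y) has_real_derivative
      (Fss (s, d) * (- 2 * x) + Fsd (s, d) * (2 * x - 2)) * (- 2 * x) - 2 * Fs (s, d)
      + (Fsd (s, d) * (- 2 * x) + Fdd (s, d) * (2 * x - 2)) * (2 * x - 2) + 2 * Fd (s, d)) (at x)"
    unfolding Gx_def using xy by (auto intro!: derivative_eq_intros Fs_x Fd_x)
  have Gyy: "((\<lambda>y. Gy x y) has_real_derivative
      (Fss (s, d) * (- 2 * y) + Fsd (s, d) * (2 * y)) * (- 2 * y) - 2 * Fs (s, d)
      + (Fsd (s, d) * (- 2 * y) + Fdd (s, d) * (2 * y)) * (2 * y) + 2 * Fd (s, d)) (at y)"
    unfolding Gy_def using xy by (auto intro!: derivative_eq_intros Fs_y Fd_y)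
  have f_coord: "f v = F (SD_coord (Re v) (Im v))" if "v \<in> A" for v
    using assms(3)[OF that] by (simp add: SD_eq_SD_coord)
  have G_x: "((\<lambda>x. F (SD_coord x (Im v))) has_real_derivative Gx (Re v) (Im v)) (at (Re v))"
    if "v \<in> A" for v
    unfolding Gx_def using assms(4)[OF that] by (intro DERIV_SD_coord_x) (simp add: SD_eq_SD_coord)
  have G_y: "((\<lambda>y. F (SD_coord (Re v) y)) has_real_derivative Gy (Re v) (Im v)) (at (Im v))"
    if "v \<in> A" for v
    unfolding Gy_def using assms(4)[OF that] by (intro DERIV_SD_coord_y) (simp add: SD_eq_SD_coord)
  have s: "s = 1 - x\<^sup>2 - y\<^sup>2" and d: "d = (1 - x)\<^sup>2 + y\<^sup>2"
    using xy by (auto simp: SD_coord_def)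
  from Lap_coordI[OF assms(1,2) f_coord G_x G_y Gxx[unfolded x_def y_def] Gyy[unfolded x_def y_def]]
  show ?thesis
    unfolding x_def[symmetric] y_def[symmetric]
    by (simp add: s d field_simps power2_eq_square)
qed

text \<open>A list of terms (c, a, b) stands for the Laurent polynomial sum of c s^a d^-b.\<close>

definition laurent :: "(real \<times> nat \<times> nat) list \<Rightarrow> real \<times> real \<Rightarrow> real" where
  "laurent ms p = (\<Sum>(c, a, b) \<leftarrow> ms. c * fst p ^ a / snd p ^ b)"

definition laurent_ds :: "(real \<times> nat \<times> nat) list \<Rightarrow> (real \<times> nat \<times> nat) list" where
  "laurent_ds ms = map (\<lambda>(c, a, b). (c * real a, a - 1, b)) ms"

definition laurent_dd :: "(real \<times> nat \<times> nat) list \<Rightarrow> (real \<times> nat \<times> nat) list" where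
  "laurent_dd ms = map (\<lambda>(c, a, b). (- c * real b, a, Suc b)) ms"

lemma has_derivative_monomial:
  fixes p :: "real \<times> real"
  assumes "snd p \<noteq> 0"
  shows "((\<lambda>q. c * fst q ^ a / snd q ^ b) has_derivative
    (\<lambda>h. c * real a * fst p ^ (a - 1) / snd p ^ b * fst h
       + - c * real b * fst p ^ a / snd p ^ Suc b * snd h)) (at p)"
  using assms by (auto intro!: derivative_eq_intros) (cases b; simp add: fun_eq_iff field_simps)

lemma has_derivative_laurent:
  fixes p :: "real \<times> real"
  assumes "snd p \<noteq> 0"
  shows "(laurent ms has_derivative
    (\<lambda>h. laurent (laurent_ds ms) p * fst h + laurent (laurent_dd ms) p * snd h)) (at p)"
proof (induction ms)
  case Nil
  then show ?case by (simp add: laurent_def laurent_ds_def laurent_dd_def)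
next
  case (Cons m ms)
  obtain c a b where m: "m = (c, a, b)" by (cases m)
  have "((\<lambda>q. c * fst q ^ a / snd q ^ b + laurent ms q) has_derivative
    (\<lambda>h. (c * real a * fst p ^ (a - 1) / snd p ^ b * fst h
       + - c * real b * fst p ^ a / snd p ^ Suc b * snd h)
       + (laurent (laurent_ds ms) p * fst h + laurent (laurent_dd ms) p * snd h))) (at p)"
    by (rule has_derivative_add[OF has_derivative_monomial[OF assms] Cons.IH])
  then show ?case
    by (simp add: m laurent_def laurent_ds_def laurent_dd_def algebra_simps)
qed

lemma laurent_dd_ds: "laurent (laurent_dd (laurent_ds ms)) = laurent (laurent_ds (laurent_dd ms))"
  by (induction ms) (auto simp: laurent_def laurent_ds_def laurent_dd_def fun_eq_iff)

definition laurent_Lap :: "(real \<times> nat \<times> nat) list \<Rightarrow> real \<times> real \<Rightarrow> real" where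
  "laurent_Lap ms p =
     (1 - fst p) * laurent (laurent_ds (laurent_ds ms)) p
   + (fst p - snd p) * laurent (laurent_ds (laurent_dd ms)) p
   + snd p * laurent (laurent_dd (laurent_dd ms)) p
   - laurent (laurent_ds ms) p + laurent (laurent_dd ms) p"

lemma laurent_Lap_Cons: "laurent_Lap (m # ms) p = laurent_Lap [m] p + laurent_Lap ms p"
  by (simp add: laurent_Lap_def laurent_def laurent_ds_def laurent_dd_def algebra_simps)

lemma laurent_Lap_monomial:
  fixes s d :: real
  assumes "d \<noteq> 0"
  shows "laurent_Lap [(c, a, b)] (s, d) =
    c * (real a * (real a - 1) * s ^ (a - 2) / d ^ b - real a * (real a - real b) * s ^ (a - 1) / d ^ b
       + real b * (real b - real a) * s ^ a / d ^ Suc b)"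
proof (cases a)
  case 0
  then show ?thesis using assms
    by (simp add: laurent_Lap_def laurent_def laurent_ds_def laurent_dd_def field_simps)
next
  case (Suc k)
  show ?thesis
  proof (cases k)
    case 0
    then show ?thesis using assms Suc
      by (simp add: laurent_Lap_def laurent_def laurent_ds_def laurent_dd_def field_simps)
  next
    case (Suc j)
    then show ?thesis using assms \<open>a = Suc k\<close>
      by (simp add: laurent_Lap_def laurent_def laurent_ds_def laurent_dd_def field_simps)
  qed
qed

text \<open>The truncated exponents a - 2 and a - 1 only occur with vanishing coefficient.\<close>

definition laurent_Lap_terms :: "(real \<times> nat \<times> nat) list \<Rightarrow> (real \<times> nat \<times> nat) list" where
  "laurent_Lap_terms ms = concat (map (\<lambda>(c, a, b).
     [(c * real a * (real a - 1), a - 2, b), (- c * real a * (real a - real b), a - 1, b),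
      (c * real b * (real b - real a), a, Suc b)]) ms)"

lemma laurent_Lap_eq_laurent_Lap_terms:
  fixes s d :: real
  assumes "d \<noteq> 0"
  shows "laurent_Lap ms (s, d) = laurent (laurent_Lap_terms ms) (s, d)"
proof (induction ms)
  case Nil
  then show ?case by (simp add: laurent_Lap_def laurent_def laurent_ds_def laurent_dd_def laurent_Lap_terms_def)
next
  case (Cons m ms)
  obtain c a b where m: "m = (c, a, b)" by (cases m)
  have "laurent_Lap (m # ms) (s, d) = laurent_Lap [m] (s, d) + laurent_Lap ms (s, d)"
    by (rule laurent_Lap_Cons)
  also have "\<dots> = laurent (laurent_Lap_terms [m]) (s, d) + laurent (laurent_Lap_terms ms) (s, d)"
    by (simp add: Cons.IH m laurent_Lap_monomial[OF assms] laurent_def laurent_Lap_terms_def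
        diff_divide_distrib add_divide_distrib algebra_simps)
  also have "\<dots> = laurent (laurent_Lap_terms (m # ms)) (s, d)"
    by (simp add: laurent_def laurent_Lap_terms_def)
  finally show ?case .
qed

lemma Lap_laurent_SD:
  assumes "open A" "z \<in> A" "1 \<notin> A" "\<And>w. w \<in> A \<Longrightarrow> f w = laurent ms (SD w)"
  shows "Lap_exists f z \<and> Lap f z = laurent (laurent_Lap_terms ms) (SD z)"
proof -
  obtain s d where sd: "SD z = (s, d)" by fastforce
  have nz: "snd (SD w) \<noteq> 0" if "w \<in> A" for w
    using that assms(3) by (auto simp: SD_def)
  have D: "(laurent ms' has_derivative
      (\<lambda>h. laurent (laurent_ds ms') (SD w) * fst h + laurent (laurent_dd ms') (SD w) * snd h))
      (at (SD w))" if "w \<in> A" for ms' w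
    using has_derivative_laurent[OF nz[OF that]] .
  from Lap_SD_profile[where F = "laurent ms" and Fs = "laurent (laurent_ds ms)"
      and Fd = "laurent (laurent_dd ms)" and Fss = "laurent (laurent_ds (laurent_ds ms))"
      and Fsd = "laurent (laurent_ds (laurent_dd ms))" and Fdd = "laurent (laurent_dd (laurent_dd ms))",
      OF assms(1,2,4) D[where ms' = ms] D[OF assms(2), where ms' = "laurent_ds ms", unfolded laurent_dd_ds]
      D[OF assms(2), where ms' = "laurent_dd ms"] sd]
  show ?thesis
    using laurent_Lap_eq_laurent_Lap_terms nz[OF assms(2)] by (simp add: sd laurent_Lap_def)
qed

definition u_terms :: "(real \<times> nat \<times> nat) list" where
  "u_terms = [(3, 4, 1), (3, 5, 2), (- 3 / 2, 4, 2), (1, 6, 3)]"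

text \<open>The terms of Lap u / w2, see laurent_Lap_u_terms.\<close>

definition v_terms :: "(real \<times> nat \<times> nat) list" where
  "v_terms = [(36, 0, 1), (- 36, 1, 1), (- 18, 0, 2), (72, 1, 2), (- 54, 2, 2),
              (36, 2, 3), (- 36, 3, 3), (- 9, 4, 4)]"

lemma laurent_Lap_u_terms: "laurent (laurent_Lap_terms u_terms) (s, d) = s\<^sup>2 * laurent v_terms (s, d)"
  by (simp add: laurent_def laurent_Lap_terms_def u_terms_def v_terms_def algebra_simps
      numeral_eq_Suc)

lemma laurent_Lap_v_terms: "laurent (laurent_Lap_terms v_terms) (s, d) = 0"
  by (simp add: laurent_def laurent_Lap_terms_def v_terms_def power2_eq_square)

theorem proposition3p1:
  shows "w2_biharmonic (\<lambda>z.
      3 * (1 - (cmod z)^2)^4 / (cmod (1 - z))^2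
    + 3 * (1 - (cmod z)^2)^5 / (cmod (1 - z))^4
    - 3 / 2 * (1 - (cmod z)^2)^4 / (cmod (1 - z))^4
    + (1 - (cmod z)^2)^6 / (cmod (1 - z))^6)" (is "w2_biharmonic ?u")
proof -
  define u where "u z = laurent u_terms (SD z)" for z
  define v where "v w = Lap u w / w2 w" for w
  have u_eq: "?u = u"
    by (simp add: fun_eq_iff u_def laurent_def u_terms_def SD_def flip: power_mult)
  have B: "open (ball (0::complex) 1)" "1 \<notin> ball (0::complex) 1" by auto
  have Lap_u: "Lap_exists u w \<and> Lap u w = laurent (laurent_Lap_terms u_terms) (SD w)"
    if "w \<in> ball 0 1" for w
    using Lap_laurent_SD[OF B(1) that B(2)] u_def by blast
  have v_eq: "v w = laurent v_terms (SD w)" if "w \<in> ball 0 1" for w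
  proof -
    obtain s d where sd: "SD w = (s, d)" by fastforce
    have "(cmod w)\<^sup>2 < 1"
      using that by (simp add: power_less_one_iff)
    then have "s \<noteq> 0" "w2 w = s\<^sup>2"
      using sd by (auto simp: SD_def w2_def)
    then show ?thesis
      using Lap_u[OF that] by (simp add: v_def sd laurent_Lap_u_terms)
  qed
  show ?thesis
    unfolding u_eq w2_biharmonic_def v_def[symmetric]
  proof (intro ballI conjI)
    fix z :: complex assume z: "z \<in> ball 0 1"
    obtain s d where sd: "SD z = (s, d)" by fastforce
    show "Lap_exists u z" using Lap_u[OF z] ..
    show "Lap_exists v z" "Lap v z = 0"
      using Lap_laurent_SD[OF B(1) z B(2) v_eq] by (simp_all add: sd laurent_Lap_v_terms)
  qed
qed

end
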